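(* Suppose Assumption (A3) of the context holds, and let $\{\sigma_k\},\{z_k\}$ be generated by Algorithm RiAL-RGD, with $\mathcal{L}_k(x)=f(x)+M_{h/\sigma_k}(\mathcal{A}(x)+z_k/\sigma_k)$ and $\Phi^*:=\inf_{x\in\mathcal{M}}\Phi(x)$. Then for every $x\in\mathcal{M}$ and $k\ge1$: $$\mathcal{L}_k(x)\ge\Phi^*-\frac{2L_h^2}{\sigma_1},\qquad \mathcal{L}_k(x)\le\Phi(x)+\frac{L_h^2}{\sigma_k},\qquad \mathcal{L}_{k+1}(x)\le\mathcal{L}_k(x)+\frac{2L_h^2}{\sigma_k}.$$
   Context: Setting. $\mathcal{E}_1,\mathcal{E}_2$ are finite-dimensional Euclidean spaces with inner product $\langle\cdot,\cdot\rangle$ and norm $\|\cdot\|$. $\mathcal{M}\subseteq\mathcal{E}_1$ is an embedded Riemannian submanifold with induced metric; $\mathrm{grad}\,g(x)=\mathrm{proj}_{\mathrm{T}_x\mathcal{M}}(\nabla g(x))$. A retraction $\mathrm{R}_x:\mathrm{T}_x\mathcal{M}\to\mathcal{M}$ (smooth, globally defined, $\mathrm{R}_x(0)=x$, $\frac{d}{dt}\mathrm{R}_x(tv)|_{t=0}=v$) is fixed. $f:\mathcal{E}_1\to\mathbb{R}$ is $C^1$, $\mathcal{A}:\mathcal{E}_1\to\mathcal{E}_2$ smooth with Jacobian $\nabla\mathcal{A}$, $h:\mathcal{E}_2\to\mathbb{R}$ convex; $\Phi(x)=f(x)+h(\mathcal{A}(x))$. For $\lambda>0$, $\mathrm{prox}_{\lambda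 h}(w)=\arg\min_u\{h(u)+\frac1{2\lambda}\|u-w\|^2\}$, $M_{\lambda h}(w)=\min_u\{h(u)+\frac1{2\lambda}\|u-w\|^2\}$. Algorithm RiAL-RGD: input $x_1\in\mathcal{M}$, $y_1=z_1=0$, $\varepsilon_1,\sigma_1>0$, $b>1$. For $k=1,2,\dots$: with $\mathcal{L}_k$ as in the claim, run $x_{k,1}=x_k$, $x_{k,t+1}=\mathrm{R}_{x_{k,t}}(-\zeta_{k,t}\mathrm{grad}\,\mathcal{L}_k(x_{k,t}))$ (stepsizes $\zeta_{k,t}>0$) until $\|\mathrm{grad}\,\mathcal{L}_k(x_{k,t_k})\|\le\varepsilon_k$; set $x_{k+1}=x_{k,t_k}$, $y_{k+1}=\mathrm{prox}_{h/\sigma_k}(\mathcal{A}(x_{k+1})+z_k/\sigma_k)$, $z_{k+1}=z_k+\sigma_k(\mathcal{A}(x_{k+1})-y_{k+1})$, $\sigma_{k+1}=b\sigma_k$, $\varepsilon_{k+1}=\varepsilon_k/b$. Assumption (A3): (i) $f(x')\le f(x)+\langle\nabla f(x),x'-x\rangle+\frac{L_f}{2}\|x'-x\|^2$ for all $x,x'\in\mathcal{M}$, and $|h(w)-h(w')|\le L_h\|w-w'\|$ for all $w,w'\in\mathcal{E}_2$; (ii) $\mathcal{A}$ is $L^0_{\mathcal{A}}$-Lipschitz and $\nabla\mathcal{A}$ is $L^1_{\mathcal{A}}$-Lipschitz on $\mathrm{conv}\,\mathcal{M}$; (iii) $\rho_{\mathcal{A}}:=\max_{x\in\mathrm{conv}\,\mathcal{M}}\|\nabla\mathcal{A}(x)\|<+\infty$.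 *)

theory Defs
  imports "HOL-Analysis.Analysis"
begin

text \<open>Tangent space of a subset M of a Euclidean space at x: velocities at 0 of
  differentiable curves lying in M (for an embedded submanifold this is T_x M).\<close>
definition tangent_space :: "'a::euclidean_space set \<Rightarrow> 'a \<Rightarrow> 'a set" where
  "tangent_space M x = {v. \<exists>\<gamma> e. e > 0 \<and> \<gamma> 0 = x \<and> \<gamma> ` {-e<..<e} \<subseteq> M \<and>
      (\<gamma> has_vector_derivative v) (at 0)}"

text \<open>Embedded (C^1) submanifold: locally the zero set of a C^1 submersion onto a
  fixed linear subspace W (local defining function).\<close>
definition embedded_submanifold :: "'a::euclidean_space set \<Rightarrow> bool" where
  "embedded_submanifold M \<longleftrightarrow>
    (\<forall>x\<in>M. \<exists>U (F :: 'a \<Rightarrow> 'a) DF W. open U \<and> x \<in> U \<and> subspace W \<and>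
       (\<forall>y\<in>U. (F has_derivative blinfun_apply (DF y)) (at y) \<and> F y \<in> W \<and>
               range (blinfun_apply (DF y)) = W) \<and>
       continuous_on U DF \<and> M \<inter> U = {y\<in>U. F y = 0})"

definition orth_proj :: "'a::euclidean_space set \<Rightarrow> 'a \<Rightarrow> 'a" where
  "orth_proj S v = (THE p. p \<in> S \<and> (\<forall>w\<in>S. inner (v - p) w = 0))"

definition egrad :: "('a::euclidean_space \<Rightarrow> real) \<Rightarrow> 'a \<Rightarrow> 'a" where
  "egrad g x = (THE gv. (g has_derivative (\<lambda>v. inner gv v)) (at x))"

definition rgrad :: "'a::euclidean_space set \<Rightarrow> ('a \<Rightarrow> real) \<Rightarrow> 'a \<Rightarrow> 'a" where
  "rgrad M g x = orth_proj (tangent_space M x) (egrad g x)"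

definition retraction :: "'a::euclidean_space set \<Rightarrow> ('a \<Rightarrow> 'a \<Rightarrow> 'a) \<Rightarrow> bool" where
  "retraction M R \<longleftrightarrow>
     (\<forall>x\<in>M. \<forall>v\<in>tangent_space M x. R x v \<in> M) \<and>
     (\<forall>x\<in>M. R x 0 = x) \<and>
     (\<forall>x\<in>M. \<forall>v\<in>tangent_space M x. ((\<lambda>t. R x (t *\<^sub>R v)) has_vector_derivative v) (at 0)) \<and>
     continuous_on {(x, v). x \<in> M \<and> v \<in> tangent_space M x} (\<lambda>(x, v). R x v)"

definition moreau :: "('b::euclidean_space \<Rightarrow> real) \<Rightarrow> real \<Rightarrow> 'b \<Rightarrow> real" where
  "moreau h lam w = Inf (range (\<lambda>u. h u + (norm (u - w))\<^sup>2 / (2 * lam)))"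

definition prox :: "('b::euclidean_space \<Rightarrow> real) \<Rightarrow> real \<Rightarrow> 'b \<Rightarrow> 'b" where
  "prox h lam w = (SOME u. \<forall>v. h u + (norm (u - w))\<^sup>2 / (2 * lam) \<le> h v + (norm (v - w))\<^sup>2 / (2 * lam))"

definition auglag :: "('a \<Rightarrow> real) \<Rightarrow> ('b::euclidean_space \<Rightarrow> real) \<Rightarrow> ('a \<Rightarrow> 'b) \<Rightarrow> real \<Rightarrow> 'b \<Rightarrow> 'a \<Rightarrow> real" where
  "auglag f h A s z x = f x + moreau h (1 / s) (A x + (1 / s) *\<^sub>R z)"

end

theory Submission
  imports Defs
begin

text \<open>For an \<open>L\<close>-Lipschitz \<open>h\<close> the Moreau envelope is squeezed between
  \<open>h w - \<lambda>L\<^sup>2/2\<close> and \<open>h u + \<parallel>u - w\<parallel>\<^sup>2/(2\<lambda>)\<close>, and the prox residual satisfies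
  \<open>\<parallel>w - prox w\<parallel> \<le> \<lambda>L\<close>. Since the multiplier update is \<open>z\<^sub>k\<^sub>+\<^sub>1 = \<sigma>\<^sub>k (w - prox w)\<close> with
  \<open>\<lambda> = 1/\<sigma>\<^sub>k\<close>, every multiplier has norm at most \<open>L\<^sub>h\<close>; the two envelope bounds at
  \<open>w = A x + z\<^sub>k/\<sigma>\<^sub>k\<close> then give \<open>\<Phi> x - 3L\<^sub>h\<^sup>2/(2\<sigma>\<^sub>k) \<le> L\<^sub>k x \<le> \<Phi> x + L\<^sub>h\<^sup>2/(2\<sigma>\<^sub>k)\<close>, and the three
  inequalities follow because \<open>\<sigma>\<^sub>k\<close> increases. Only the Lipschitz continuity of \<open>h\<close> and the
  outer updates enter: the inner loop, \<open>f\<close> and \<open>A\<close> may be arbitrary.\<close>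

lemma lipschitz_on_UNIV_if_abs_diff_le:
  fixes h :: "'b::euclidean_space \<Rightarrow> real"
  assumes "\<forall>w w'. \<bar>h w - h w'\<bar> \<le> L * norm (w - w')"
  shows "L-lipschitz_on UNIV h"
proof (rule lipschitz_onI)
  obtain e :: 'b where "e \<in> Basis" using nonempty_Basis by blast
  then show "0 \<le> L" using assms[rule_format, of e 0] by (simp add: order_trans[OF abs_ge_zero])
qed (use assms in \<open>simp add: dist_real_def dist_norm\<close>)

lemma lipschitz_on_UNIV_lower:
  fixes h :: "'b::real_normed_vector \<Rightarrow> real"
  assumes "L-lipschitz_on UNIV h"
  shows "h w - L * norm (u - w) \<le> h u"
  using lipschitz_on_normD[OF assms, of w u] by (simp add: norm_minus_commute)

text \<open>Completing the square: \<open>t\<^sup>2/(2\<lambda>) - L t \<ge> -\<lambda>L\<^sup>2/2\<close> with \<open>t = \<parallel>u - w\<parallel>\<close>.\<close>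
lemma moreau_objective_ge:
  fixes h :: "'b::euclidean_space \<Rightarrow> real"
  assumes h: "L-lipschitz_on UNIV h" and lam: "lam > 0"
  shows "h w - lam * L\<^sup>2 / 2 \<le> h u + (norm (u - w))\<^sup>2 / (2 * lam)"
proof -
  define t where "t = norm (u - w)"
  have "0 \<le> (t - lam * L)\<^sup>2 / (2 * lam)" using lam by simp
  also have "\<dots> = t\<^sup>2 / (2 * lam) - L * t + lam * L\<^sup>2 / 2"
    using lam by (simp add: power2_eq_square field_simps)
  finally show ?thesis using lipschitz_on_UNIV_lower[OF h, of w u] by (simp add: t_def)
qed

lemma moreau_ge:
  fixes h :: "'b::euclidean_space \<Rightarrow> real"
  assumes "L-lipschitz_on UNIV h" and "lam > 0"
  shows "h w - lam * L\<^sup>2 / 2 \<le> moreau h lam w"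
  unfolding moreau_def by (rule cINF_greatest) (use moreau_objective_ge[OF assms] in auto)

lemma moreau_le:
  fixes h :: "'b::euclidean_space \<Rightarrow> real"
  assumes "L-lipschitz_on UNIV h" and "lam > 0"
  shows "moreau h lam w \<le> h u + (norm (u - w))\<^sup>2 / (2 * lam)"
  unfolding moreau_def
proof (rule cINF_lower)
  show "bdd_below (range (\<lambda>u. h u + (norm (u - w))\<^sup>2 / (2 * lam)))"
    using moreau_objective_ge[OF assms] by (intro bdd_belowI2)
qed simp

text \<open>The objective is coercive, so it attains its infimum on a large enough ball around \<open>w\<close>.\<close>
lemma prox_minimizes:
  fixes h :: "'b::euclidean_space \<Rightarrow> real"
  assumes h: "L-lipschitz_on UNIV h" and lam: "lam > 0"
  shows "h (prox h lam w) + (norm (prox h lam w - w))\<^sup>2 / (2 * lam)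
           \<le> h v + (norm (v - w))\<^sup>2 / (2 * lam)"
proof -
  define g where "g u = h u + (norm (u - w))\<^sup>2 / (2 * lam)" for u
  define r where "r = 2 * lam * L"
  have "0 \<le> L" using lipschitz_on_nonneg[OF h] .
  then have r0: "0 \<le> r" using lam by (simp add: r_def)
  have "continuous_on (cball w r) h"
    using lipschitz_on_continuous_on[OF h] continuous_on_subset by blast
  then have "continuous_on (cball w r) g" unfolding g_def using lam by (intro continuous_intros) auto
  then obtain u where u: "\<And>v. v \<in> cball w r \<Longrightarrow> g u \<le> g v"
    using continuous_attains_inf[OF compact_cball] r0 by (metis empty_iff centre_in_cball)
  have "g u \<le> g v" for v
  proof (cases "v \<in> cball w r")
    case False
    define t where "t = norm (v - w)"
    have "r \<le> t" using False by (simp add: t_def dist_norm norm_minus_commute)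
    then have "0 \<le> t * (t - r) / (2 * lam)" using r0 lam by simp
    also have "\<dots> = t\<^sup>2 / (2 * lam) - L * t"
      using lam by (simp add: r_def power2_eq_square field_simps)
    finally have "g w \<le> g v"
      using lipschitz_on_UNIV_lower[OF h, of w v] by (simp add: g_def t_def)
    then show ?thesis using u[of w] r0 by simp
  qed (use u in auto)
  then have "\<exists>u. \<forall>v. g u \<le> g v" by blast
  then show ?thesis unfolding prox_def g_def by (rule someI_ex[THEN spec])
qed

text \<open>Moving \<open>p = prox h lam w\<close> towards \<open>w\<close> by a fraction \<open>s\<close> gains \<open>s(2 - s)r\<^sup>2/(2 lam)\<close>
  in the quadratic term, where \<open>r = \<parallel>w - p\<parallel>\<close>, and loses at most \<open>L s r\<close> in \<open>h\<close>; a small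
  \<open>s > 0\<close> thus forces \<open>r \<le> lam L\<close>.\<close>
lemma norm_sub_prox_le:
  fixes h :: "'b::euclidean_space \<Rightarrow> real"
  assumes h: "L-lipschitz_on UNIV h" and lam: "lam > 0"
  shows "norm (w - prox h lam w) \<le> lam * L"
proof (rule ccontr)
  define p where "p = prox h lam w"
  define r where "r = norm (w - p)"
  assume "\<not> ?thesis"
  then have r_gt: "lam * L < r" by (simp add: p_def r_def)
  have "0 \<le> L" using lipschitz_on_nonneg[OF h] .
  with lam have "0 \<le> lam * L" by simp
  with r_gt have r0: "0 < r" by linarith
  define s where "s = 1 - lam * L / r"
  have s: "0 < s" "s \<le> 1" using r0 r_gt lam \<open>0 \<le> L\<close> by (auto simp: s_def field_simps)
  define v where "v = p + s *\<^sub>R (w - p)"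
  have "v - w = (1 - s) *\<^sub>R (p - w)" by (simp add: v_def algebra_simps)
  then have "norm (v - w) = (1 - s) * r"
    using s by (simp add: r_def norm_minus_commute)
  moreover have "h v \<le> h p + L * (s * r)"
    using lipschitz_on_normD[OF h, of v p] s by (simp add: v_def r_def)
  moreover have "h p + r\<^sup>2 / (2 * lam) \<le> h v + (norm (v - w))\<^sup>2 / (2 * lam)"
    using prox_minimizes[OF h lam, of w v] by (simp add: p_def r_def norm_minus_commute)
  ultimately have "r\<^sup>2 / (2 * lam) \<le> L * (s * r) + ((1 - s) * r)\<^sup>2 / (2 * lam)" by simp
  then have "s * r * (r * (2 - s)) \<le> s * r * (2 * lam * L)"
    using lam by (simp add: field_simps power2_eq_square)
  then have "r * (2 - s) \<le> 2 * lam * L" using s r0 by simp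
  moreover have "r * (2 - s) = r + lam * L" using r0 by (simp add: s_def field_simps)
  ultimately show False using r_gt by (simp add: mult.commute)
qed

lemma moreau_shift_le:
  fixes h :: "'b::euclidean_space \<Rightarrow> real"
  assumes "L-lipschitz_on UNIV h" and lam: "lam > 0"
  shows "moreau h lam (a + lam *\<^sub>R z) \<le> h a + lam * (norm z)\<^sup>2 / 2"
proof -
  have "(norm (a - (a + lam *\<^sub>R z)))\<^sup>2 / (2 * lam) = lam * (norm z)\<^sup>2 / 2"
    using lam by (simp add: power2_eq_square)
  then show ?thesis using moreau_le[OF assms, of "a + lam *\<^sub>R z" a] by simp
qed

lemma moreau_shift_ge:
  fixes h :: "'b::euclidean_space \<Rightarrow> real"
  assumes h: "L-lipschitz_on UNIV h" and lam: "lam > 0" and z: "norm z \<le> L"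
  shows "h a - 3 / 2 * lam * L\<^sup>2 \<le> moreau h lam (a + lam *\<^sub>R z)"
proof -
  have "h a - L * (lam * norm z) \<le> h (a + lam *\<^sub>R z)"
    using lipschitz_on_UNIV_lower[OF h, of a "a + lam *\<^sub>R z"] lam by simp
  moreover have "L * (lam * norm z) \<le> lam * L\<^sup>2"
    using lipschitz_on_nonneg[OF h] lam z mult_left_mono[OF z, of "L * lam"]
    by (simp add: power2_eq_square algebra_simps)
  ultimately show ?thesis using moreau_ge[OF h lam, of "a + lam *\<^sub>R z"] by simp
qed

lemma auglag_ge:
  fixes h :: "'b::euclidean_space \<Rightarrow> real"
  assumes "L-lipschitz_on UNIV h" and "\<sigma> > 0" and "norm z \<le> L"
  shows "f u + h (A u) - 3 / 2 * (L\<^sup>2 / \<sigma>) \<le> auglag f h A \<sigma> z u"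
  using moreau_shift_ge[of L h "1 / \<sigma>" z "A u"] assms by (simp add: auglag_def)

lemma auglag_le:
  fixes h :: "'b::euclidean_space \<Rightarrow> real"
  assumes "L-lipschitz_on UNIV h" and "\<sigma> > 0" and "norm z \<le> L"
  shows "auglag f h A \<sigma> z u \<le> f u + h (A u) + L\<^sup>2 / \<sigma> / 2"
proof -
  have "(norm z)\<^sup>2 / \<sigma> / 2 \<le> L\<^sup>2 / \<sigma> / 2"
    using assms(2,3) by (intro divide_right_mono power_mono) auto
  then show ?thesis
    using moreau_shift_le[OF assms(1), of "1 / \<sigma>" "A u" z] assms(2) by (simp add: auglag_def)
qed

lemma norm_multiplier_update_le:
  fixes h :: "'b::euclidean_space \<Rightarrow> real"
  assumes h: "L-lipschitz_on UNIV h" and \<sigma>: "\<sigma> > 0"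
  shows "norm (z + \<sigma> *\<^sub>R (a - prox h (1 / \<sigma>) (a + (1 / \<sigma>) *\<^sub>R z))) \<le> L"
proof -
  define w where "w = a + (1 / \<sigma>) *\<^sub>R z"
  have "z + \<sigma> *\<^sub>R (a - prox h (1 / \<sigma>) w) = \<sigma> *\<^sub>R (w - prox h (1 / \<sigma>) w)"
    using \<sigma> by (simp add: w_def algebra_simps)
  moreover have "\<sigma> * norm (w - prox h (1 / \<sigma>) w) \<le> \<sigma> * (1 / \<sigma> * L)"
    using norm_sub_prox_le[OF h, of "1 / \<sigma>" w] \<sigma> by (intro mult_left_mono) auto
  ultimately show ?thesis using \<sigma> by (simp add: w_def)
qed

lemma penalties_increase_multipliers_bounded:
  fixes h :: "'b::euclidean_space \<Rightarrow> real" and a z :: "nat \<Rightarrow> 'b"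
  assumes h: "L-lipschitz_on UNIV h" and "0 < \<sigma> 1" "1 < b" "z 1 = 0"
    and \<sigma>_upd: "\<forall>k\<ge>1. \<sigma> (k + 1) = b * \<sigma> k"
    and z_upd: "\<forall>k\<ge>1. z (k + 1) = z k + \<sigma> k *\<^sub>R (a k - prox h (1 / \<sigma> k) (a k + (1 / \<sigma> k) *\<^sub>R z k))"
    and "1 \<le> k"
  shows "\<sigma> 1 \<le> \<sigma> k \<and> \<sigma> k \<le> \<sigma> (k + 1) \<and> norm (z k) \<le> L"
  using \<open>1 \<le> k\<close>
proof (induction k rule: dec_induct)
  case base
  then show ?case using assms(2-4) \<sigma>_upd lipschitz_on_nonneg[OF h] by simp
next
  case (step k)
  then have "0 < \<sigma> (k + 1)" "\<sigma> 1 \<le> \<sigma> (k + 1)" using assms(2) by linarith+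
  moreover have "\<sigma> (k + 1) \<le> \<sigma> (k + 2)"
    using \<sigma>_upd[rule_format, of "k + 1"] \<open>0 < \<sigma> (k + 1)\<close> \<open>1 < b\<close> by simp
  moreover have "norm (z (k + 1)) \<le> L"
    using z_upd norm_multiplier_update_le[OF h] step \<open>0 < \<sigma> 1\<close> by simp
  ultimately show ?case by (simp add: numeral_2_eq_2)
qed

lemma ereal_INF_minus_le:
  assumes "u \<in> M" and "\<Phi> u - c \<le> r"
  shows "(INF v\<in>M. ereal (\<Phi> v)) - ereal c \<le> ereal r"
proof -
  have "(INF v\<in>M. ereal (\<Phi> v)) - ereal c \<le> ereal (\<Phi> u) - ereal c"
    using assms(1) by (intro ereal_minus_mono INF_lower) auto
  then show ?thesis using assms(2) by (simp add: order_trans)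
qed

theorem lemma3:
  fixes M :: "'a::euclidean_space set"
    and R :: "'a \<Rightarrow> 'a \<Rightarrow> 'a"
    and f :: "'a \<Rightarrow> real" and gf :: "'a \<Rightarrow> 'a"
    and A :: "'a \<Rightarrow> 'b::euclidean_space" and DA :: "'a \<Rightarrow> 'a \<Rightarrow>\<^sub>L 'b"
    and h :: "'b \<Rightarrow> real"
    and Lf Lh LA0 LA1 b :: real
    and x :: "nat \<Rightarrow> 'a" and y z :: "nat \<Rightarrow> 'b"
    and \<sigma> \<epsilon> :: "nat \<Rightarrow> real"
    and xin :: "nat \<Rightarrow> nat \<Rightarrow> 'a" and \<zeta> :: "nat \<Rightarrow> nat \<Rightarrow> real" and T :: "nat \<Rightarrow> nat"
  assumes manifold: "embedded_submanifold M"
    and retr: "retraction M R"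
    and f_C1: "\<forall>u. (f has_derivative (\<lambda>v. inner (gf u) v)) (at u)" "continuous_on UNIV gf"
    and A_diff: "\<forall>u. (A has_derivative blinfun_apply (DA u)) (at u)" "continuous_on UNIV DA"
    and h_convex: "convex_on UNIV h"
    \<comment> \<open>Assumption (A3)\<close>
    and A3_f: "\<forall>u\<in>M. \<forall>u'\<in>M. f u' \<le> f u + inner (gf u) (u' - u) + Lf / 2 * (norm (u' - u))\<^sup>2"
    and A3_h: "\<forall>w w'. \<bar>h w - h w'\<bar> \<le> Lh * norm (w - w')"
    and A3_A0: "\<forall>u\<in>convex hull M. \<forall>u'\<in>convex hull M. norm (A u - A u') \<le> LA0 * norm (u - u')"
    and A3_A1: "\<forall>u\<in>convex hull M. \<forall>u'\<in>convex hull M. norm (DA u - DA u') \<le> LA1 * norm (u - u')"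
    and A3_rho: "bounded (DA ` (convex hull M))"
    \<comment> \<open>Algorithm RiAL-RGD\<close>
    and init: "x 1 \<in> M" "y 1 = 0" "z 1 = 0" "\<epsilon> 1 > 0" "\<sigma> 1 > 0" "b > 1"
    and inner_start: "\<forall>k\<ge>1. xin k 1 = x k"
    and inner_T: "\<forall>k\<ge>1. T k \<ge> 1"
    and inner_step: "\<forall>k\<ge>1. \<forall>t. 1 \<le> t \<and> t < T k \<longrightarrow> \<zeta> k t > 0 \<and>
        xin k (t + 1) = R (xin k t) (- \<zeta> k t *\<^sub>R rgrad M (auglag f h A (\<sigma> k) (z k)) (xin k t))"
    and inner_continue: "\<forall>k\<ge>1. \<forall>t. 1 \<le> t \<and> t < T k \<longrightarrow>
        norm (rgrad M (auglag f h A (\<sigma> k) (z k)) (xin k t)) > \<epsilon> k"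
    and inner_stop: "\<forall>k\<ge>1. norm (rgrad M (auglag f h A (\<sigma> k) (z k)) (xin k (T k))) \<le> \<epsilon> k"
    and x_upd: "\<forall>k\<ge>1. x (k + 1) = xin k (T k)"
    and y_upd: "\<forall>k\<ge>1. y (k + 1) = prox h (1 / \<sigma> k) (A (x (k + 1)) + (1 / \<sigma> k) *\<^sub>R z k)"
    and z_upd: "\<forall>k\<ge>1. z (k + 1) = z k + \<sigma> k *\<^sub>R (A (x (k + 1)) - y (k + 1))"
    and sigma_upd: "\<forall>k\<ge>1. \<sigma> (k + 1) = b * \<sigma> k"
    and eps_upd: "\<forall>k\<ge>1. \<epsilon> (k + 1) = \<epsilon> k / b"
  shows "\<forall>u\<in>M. \<forall>k\<ge>1.
     ereal (auglag f h A (\<sigma> k) (z k) u) \<ge> (INF v\<in>M. ereal (f v + h (A v))) - ereal (2 * Lh\<^sup>2 / \<sigma> 1) \<and>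
     auglag f h A (\<sigma> k) (z k) u \<le> f u + h (A u) + Lh\<^sup>2 / \<sigma> k \<and>
     auglag f h A (\<sigma> (k + 1)) (z (k + 1)) u \<le> auglag f h A (\<sigma> k) (z k) u + 2 * Lh\<^sup>2 / \<sigma> k"
proof -
  have h: "Lh-lipschitz_on UNIV h" using A3_h by (rule lipschitz_on_UNIV_if_abs_diff_le)
  have inv: "\<sigma> 1 \<le> \<sigma> k \<and> \<sigma> k \<le> \<sigma> (k + 1) \<and> norm (z k) \<le> Lh" if "1 \<le> k" for k
    using penalties_increase_multipliers_bounded[where \<sigma> = \<sigma> and z = z and a = "\<lambda>k. A (x (k + 1))",
        OF h init(5,6,3) sigma_upd _ that] z_upd y_upd
    by simp
  show ?thesis
  proof (intro ballI allI impI conjI)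
    fix u and k :: nat
    assume "u \<in> M" "1 \<le> k"
    with inv[of k] inv[of "k + 1"] init(5)
    have \<sigma>: "0 < \<sigma> 1" "\<sigma> 1 \<le> \<sigma> k" "\<sigma> k \<le> \<sigma> (k + 1)"
      and z: "norm (z k) \<le> Lh" "norm (z (k + 1)) \<le> Lh" by auto
    then have pos: "0 < \<sigma> k" "0 < \<sigma> (k + 1)" by linarith+
    have lo: "f u + h (A u) - 3 / 2 * (Lh\<^sup>2 / \<sigma> k) \<le> auglag f h A (\<sigma> k) (z k) u"
      using auglag_ge[OF h pos(1) z(1)] .
    have up: "auglag f h A (\<sigma> k) (z k) u \<le> f u + h (A u) + Lh\<^sup>2 / \<sigma> k / 2"
      using auglag_le[OF h pos(1) z(1)] .
    have up': "auglag f h A (\<sigma> (k + 1)) (z (k + 1)) u \<le> f u + h (A u) + Lh\<^sup>2 / \<sigma> (k + 1) / 2"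
      using auglag_le[OF h pos(2) z(2)] .
    have "Lh\<^sup>2 / \<sigma> k \<le> Lh\<^sup>2 / \<sigma> 1" "Lh\<^sup>2 / \<sigma> (k + 1) \<le> Lh\<^sup>2 / \<sigma> k" "0 \<le> Lh\<^sup>2 / \<sigma> k"
      using \<sigma> pos by (auto intro: divide_left_mono)
    moreover have "2 * Lh\<^sup>2 / \<sigma> k = 2 * (Lh\<^sup>2 / \<sigma> k)" "2 * Lh\<^sup>2 / \<sigma> 1 = 2 * (Lh\<^sup>2 / \<sigma> 1)" by simp_all
    ultimately show "(INF v\<in>M. ereal (f v + h (A v))) - ereal (2 * Lh\<^sup>2 / \<sigma> 1) \<le> ereal (auglag f h A (\<sigma> k) (z k) u)"
      and "auglag f h A (\<sigma> k) (z k) u \<le> f u + h (A u) + Lh\<^sup>2 / \<sigma> k"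
      and "auglag f h A (\<sigma> (k + 1)) (z (k + 1)) u \<le> auglag f h A (\<sigma> k) (z k) u + 2 * Lh\<^sup>2 / \<sigma> k"
      using lo up up' by (auto intro!: ereal_INF_minus_le[OF \<open>u \<in> M\<close>])
  qed
qed

end
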